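(* Let $\alpha>-1$ and $W(x,y)=\dfrac{x^{\alpha}y^{\alpha+1}e^{-x-y}}{x+y}$ on $(0,\infty)^2$. Let $\{p_k\}$, $\{q_k\}$ be the monic Cauchy–Laguerre biorthogonal polynomials ($\deg p_k=\deg q_k=k$, monic, $\int_0^\infty\!\int_0^\infty p_k(x)q_l(y)W(x,y)\,dx\,dy=h_k\delta_{kl}$). Write $p_k(x)=\sum_{i=0}^k a_{k,i}x^i$ and $q_k(y)=\sum_{i=0}^k\hat a_{k,i}y^i$ with $a_{k,k}=\hat a_{k,k}=1$. Define $b_{\beta,0}=\hat b_{\beta,0}=1$ and, for $1\le i\le\beta$, $b_{\beta,i}=-\sum_{j=0}^{i-1}b_{\beta,j}a_{\beta-j,\beta-i}$ and $\hat b_{\beta,i}=-\sum_{j=0}^{i-1}\hat b_{\beta,j}\hat a_{\beta-j,\beta-i}$, with the convention $b_{\beta,i}=\hat b_{\beta,i}=0$ for $i<0$. Then for all $\beta,k,j\in\mathbb{N}$, $$\frac{1}{h_j}\int_0^\infty\!\!\int_0^\infty x^{\beta}p_k(x)q_j(y)W(x,y)\,dx\,dy=\sum_{\ell=0}^{k}a_{k,\ell}\,b_{\beta+\ell,\beta+\ell-j},$$ $$\frac{1}{h_j}\int_0^\infty\!\!\int_0^\infty y^{\beta}p_j(x)q_k(y)W(x,y)\,dx\,dy=\sum_{\ell=0}^{k}\hat a_{k,\ell}\,\hat b_{\beta+\ell,\beta+\ell-j}.$$ *)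

theory Defs
  imports "HOL-Analysis.Analysis" "HOL-Computational_Algebra.Polynomial"
begin

definition CL_weight :: "real \<Rightarrow> real \<Rightarrow> real \<Rightarrow> real" where
  "CL_weight \<alpha> x y = x powr \<alpha> * y powr (\<alpha> + 1) * exp (- x - y) / (x + y)"

definition CL_int :: "real \<Rightarrow> (real \<Rightarrow> real \<Rightarrow> real) \<Rightarrow> real" where
  "CL_int \<alpha> f = (LINT z : {0<..} \<times> {0<..} | lborel. f (fst z) (snd z) * CL_weight \<alpha> (fst z) (snd z))"

definition CL_h :: "real \<Rightarrow> (nat \<Rightarrow> real poly) \<Rightarrow> (nat \<Rightarrow> real poly) \<Rightarrow> nat \<Rightarrow> real" where
  "CL_h \<alpha> p q k = CL_int \<alpha> (\<lambda>x y. poly (p k) x * poly (q k) y)"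

definition CL_biorthogonal :: "real \<Rightarrow> (nat \<Rightarrow> real poly) \<Rightarrow> (nat \<Rightarrow> real poly) \<Rightarrow> bool" where
  "CL_biorthogonal \<alpha> p q \<longleftrightarrow>
     (\<forall>k. degree (p k) = k \<and> lead_coeff (p k) = 1 \<and> degree (q k) = k \<and> lead_coeff (q k) = 1) \<and>
     (\<forall>k l. k \<noteq> l \<longrightarrow> CL_int \<alpha> (\<lambda>x y. poly (p k) x * poly (q l) y) = 0) \<and>
     (\<forall>k. CL_h \<alpha> p q k \<noteq> 0)"

fun bnat :: "(nat \<Rightarrow> real poly) \<Rightarrow> nat \<Rightarrow> nat \<Rightarrow> real" where
  "bnat p \<beta> i = (if i = 0 then 1
       else - (\<Sum>j<i. bnat p \<beta> j * coeff (p (\<beta> - j)) (\<beta> - i)))"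

definition bcoef :: "(nat \<Rightarrow> real poly) \<Rightarrow> nat \<Rightarrow> int \<Rightarrow> real" where
  "bcoef p \<beta> i = (if i < 0 then 0 else bnat p \<beta> (nat i))"

end

theory Submission
  imports Defs
begin

text \<open>Since p_n is monic of degree n, the triangular system
  x^n = (\<Sum>i\<le>n. b(n,i) p_(n-i)(x)) is solved exactly by the recursion defining b(n,i).
  Integration against W is a bilinear form on polynomials (all moments are finite, as
  W(x,y) \<le> x^\<alpha> e^-x y^\<alpha> e^-y), and when the expansion of x^n is paired with q_j,
  biorthogonality leaves only the term i = n - j, so that \<langle>x^n, q_j\<rangle> = b(n,n-j) h_j.
  Expanding x^\<beta> p_k(x) into the monomials x^(\<beta>+l) gives the first identity; the second is
  the same argument in y with the roles of p and q exchanged.\<close>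

declare bnat.simps[simp del]

lemma monom_eq_sum_bnat:
  assumes deg: "\<And>k. degree (p k) = k" and monic: "\<And>k. lead_coeff (p k) = 1"
  shows "monom 1 n = (\<Sum>i\<le>n. smult (bnat p n i) (p (n - i)))"
proof (rule poly_eqI)
  fix t
  show "coeff (monom 1 n) t = coeff (\<Sum>i\<le>n. smult (bnat p n i) (p (n - i))) t"
  proof (cases "t \<le> n")
    case False
    then have "coeff (p (n - i)) t = 0" for i
      using deg[of "n - i"] by (intro coeff_eq_0) auto
    with False show ?thesis by (simp add: coeff_sum)
  next
    case True
    define m where "m = n - t"
    have "n - m = t" and split: "{..n} = {..m} \<union> {m<..n}"
      using True by (auto simp: m_def)
    have high_terms: "bnat p n i * coeff (p (n - i)) t = 0" if "i \<in> {m<..n}" for i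
      using that deg[of "n - i"] by (auto simp: m_def coeff_eq_0)
    have "coeff (\<Sum>i\<le>n. smult (bnat p n i) (p (n - i))) t = (\<Sum>i\<le>m. bnat p n i * coeff (p (n - i)) t)"
      unfolding coeff_sum coeff_smult split
      by (subst sum.union_disjoint) (auto simp: high_terms)
    also have "\<dots> = (\<Sum>i<m. bnat p n i * coeff (p (n - i)) (n - m)) + bnat p n m"
      using deg[of t] monic[of t] \<open>n - m = t\<close> by (simp add: lessThan_Suc_atMost[symmetric])
    also have "\<dots> = (if m = 0 then 1 else 0)"
      by (subst (2) bnat.simps) simp
    also have "\<dots> = coeff (monom 1 n) t"
      using True by (auto simp: m_def coeff_monom)
    finally show ?thesis by simp
  qed
qed

lemma monom_mult_eq_sum_monom:
  "monom 1 m * P = (\<Sum>l\<le>degree P. smult (coeff P l) (monom 1 (m + l)))"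
proof -
  have "monom 1 m * P = (\<Sum>l\<le>degree P. monom 1 m * monom (coeff P l) l)"
    by (subst (1) poly_as_sum_of_monoms[symmetric]) (simp add: sum_distrib_left)
  then show ?thesis
    by (simp add: mult_monom smult_monom mult.commute)
qed

definition linear_poly_functional :: "(real poly \<Rightarrow> real) \<Rightarrow> bool" where
  "linear_poly_functional L \<longleftrightarrow>
     (\<forall>P Q. L (P + Q) = L P + L Q) \<and> (\<forall>c P. L (smult c P) = c * L P)"

lemma linear_poly_functional_sum:
  assumes "linear_poly_functional L"
  shows "L (\<Sum>i\<in>I. smult (c i) (P i)) = (\<Sum>i\<in>I. c i * L (P i))"
proof -
  have "L 0 = 0"
    using assms unfolding linear_poly_functional_def by (metis mult_zero_left smult_0_left)
  then show ?thesis
    using assms by (induction I rule: infinite_finite_induct) (simp_all add: linear_poly_functional_def)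
qed

lemma biorthogonal_functional_monom:
  assumes L: "linear_poly_functional L"
    and deg: "\<And>k. degree (p k) = k" and monic: "\<And>k. lead_coeff (p k) = 1"
    and orth: "\<And>m. L (p m) = (if m = j then h else 0)"
  shows "L (monom 1 n) = bcoef p n (int n - int j) * h"
proof -
  have "L (monom 1 n) = (\<Sum>i\<le>n. bnat p n i * (if n - i = j then h else 0))"
    by (simp add: monom_eq_sum_bnat[OF deg monic] linear_poly_functional_sum[OF L] orth)
  also have "\<dots> = (\<Sum>i\<le>n. if i = n - j \<and> j \<le> n then bnat p n i * h else 0)"
    by (intro sum.cong) auto
  also have "\<dots> = bcoef p n (int n - int j) * h"
    by (simp add: bcoef_def nat_diff_distrib)
  finally show ?thesis .
qed

lemma biorthogonal_functional_moment:
  assumes L: "linear_poly_functional L"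
    and deg: "\<And>k. degree (p k) = k" and monic: "\<And>k. lead_coeff (p k) = 1"
    and orth: "\<And>m. L (p m) = (if m = j then h else 0)"
  shows "L (monom 1 m * P) = (\<Sum>l\<le>degree P. coeff P l * bcoef p (m + l) (int (m + l) - int j)) * h"
  unfolding monom_mult_eq_sum_monom linear_poly_functional_sum[OF L] sum_distrib_right
  by (simp add: biorthogonal_functional_monom[OF L deg monic orth] mult.assoc)

lemma set_integrable_Gamma_density:
  fixes c :: real
  assumes "c > -1"
  shows "set_integrable lborel {0<..} (\<lambda>t. t powr c / exp t)"
proof -
  have "(\<integral>\<^sup>+t. ennreal (norm (indicator {0..} t * t powr c / exp t)) \<partial>lborel) = Gamma (c + 1)"
    using Gamma_conv_nn_integral_real[of "c + 1"] assms by (simp add: abs_mult)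
  then have "integrable lborel (\<lambda>t. indicator {0..} t * t powr c / exp t)"
    by (subst integrable_iff_bounded) simp
  moreover \<comment> \<open>the indicators differ only at \<open>t = 0\<close>, where \<open>0 powr c = 0\<close>\<close>
  have "indicator {0..} t * t powr c / exp t = indicator {0<..} t *\<^sub>R (t powr c / exp t)" for t :: real
    by (cases "t = 0") (auto simp: indicator_def)
  ultimately show ?thesis
    by (simp add: set_integrable_def)
qed

lemma (in pair_sigma_finite) set_integrable_mult_fst_snd:
  fixes f g :: "_ \<Rightarrow> real"
  assumes "set_integrable M1 A f" "set_integrable M2 B g"
  shows "set_integrable (M1 \<Otimes>\<^sub>M M2) (A \<times> B) (\<lambda>z. f (fst z) * g (snd z))"
proof -
  define F where "F x = indicator A x * f x" for x
  define G where "G y = indicator B y * g y" for y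
  have F: "integrable M1 F" and G: "integrable M2 G"
    using assms unfolding F_def G_def set_integrable_def by simp_all
  have "integrable (M1 \<Otimes>\<^sub>M M2) (\<lambda>z. F (fst z) * G (snd z))"
  proof (rule Fubini_integrable)
    show "(\<lambda>z. F (fst z) * G (snd z)) \<in> borel_measurable (M1 \<Otimes>\<^sub>M M2)"
      using F G by measurable
    show "integrable M1 (\<lambda>x. \<integral>y. norm (F (fst (x, y)) * G (snd (x, y))) \<partial>M2)"
      using F by (simp add: abs_mult)
    show "AE x in M1. integrable M2 (\<lambda>y. F (fst (x, y)) * G (snd (x, y)))"
      using G by simp
  qed
  then show ?thesis
    by (simp add: set_integrable_def F_def G_def indicator_times mult_ac)
qed

lemma CL_weight_monom_bound:
  fixes x y :: real
  assumes "x > 0" "y > 0"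
  shows "\<bar>x ^ a * y ^ b * CL_weight \<alpha> x y\<bar> \<le> x powr (a + \<alpha>) / exp x * (y powr (b + \<alpha>) / exp y)"
proof -
  let ?B = "x powr (a + \<alpha>) / exp x * (y powr (b + \<alpha>) / exp y)"
  have "x ^ a * y ^ b * CL_weight \<alpha> x y
          = (x ^ a * x powr \<alpha>) * (y ^ b * y powr (\<alpha> + 1)) * exp (- x - y) / (x + y)"
    by (simp add: CL_weight_def algebra_simps)
  also have "\<dots> = ?B * (y / (x + y))"
    using assms by (simp add: powr_add powr_realpow exp_diff exp_minus field_simps)
  finally have "x ^ a * y ^ b * CL_weight \<alpha> x y = ?B * (y / (x + y))" .
  moreover have "0 \<le> ?B" "0 \<le> y / (x + y)" "y / (x + y) \<le> 1"
    using assms by auto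
  ultimately show ?thesis
    by (metis abs_of_nonneg mult_left_le mult_nonneg_nonneg)
qed

lemma set_integrable_CL_monom:
  assumes "\<alpha> > -1"
  shows "set_integrable lborel ({0<..} \<times> {0<..})
           (\<lambda>z. fst z ^ a * snd z ^ b * CL_weight \<alpha> (fst z) (snd z))"
proof (rule set_integrable_bound)
  show "set_integrable lborel ({0<..} \<times> {0<..})
          (\<lambda>z. fst z powr (a + \<alpha>) / exp (fst z) * (snd z powr (b + \<alpha>) / exp (snd z)))"
    using lborel_pair.set_integrable_mult_fst_snd[OF set_integrable_Gamma_density set_integrable_Gamma_density] assms
    by (simp add: lborel_prod)
  show "set_borel_measurable lborel ({0<..} \<times> {0<..})
          (\<lambda>z. fst z ^ a * snd z ^ b * CL_weight \<alpha> (fst z) (snd z))"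
    unfolding set_borel_measurable_def CL_weight_def lborel_prod[symmetric] by measurable
  show "AE z in lborel. z \<in> {0<..} \<times> {0<..} \<longrightarrow>
          norm (fst z ^ a * snd z ^ b * CL_weight \<alpha> (fst z) (snd z))
            \<le> norm (fst z powr (a + \<alpha>) / exp (fst z) * (snd z powr (b + \<alpha>) / exp (snd z)))"
    using CL_weight_monom_bound by auto
qed

lemma set_integrable_CL_poly:
  assumes "\<alpha> > -1"
  shows "set_integrable lborel ({0<..} \<times> {0<..})
           (\<lambda>z. poly P (fst z) * poly Q (snd z) * CL_weight \<alpha> (fst z) (snd z))"
proof -
  have "poly P x * poly Q y = (\<Sum>i\<le>degree P. \<Sum>j\<le>degree Q. coeff P i * coeff Q j * (x ^ i * y ^ j))" for x y
    by (simp add: poly_altdef sum_product mult_ac)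
  then have "poly P x * poly Q y * CL_weight \<alpha> x y
          = (\<Sum>i\<le>degree P. \<Sum>j\<le>degree Q. coeff P i * coeff Q j * (x ^ i * y ^ j * CL_weight \<alpha> x y))" for x y
    by (simp add: sum_distrib_right mult.assoc)
  then show ?thesis
    using set_integrable_CL_monom[OF assms]
    unfolding set_integrable_def
    by (simp only: real_scaleR_def sum_distrib_left mult.left_commute[of "indicator _ _"])
      (intro Bochner_Integration.integrable_sum Bochner_Integration.integrable_mult_right; simp)
qed

lemma CL_int_add:
  assumes "set_integrable lborel ({0<..} \<times> {0<..}) (\<lambda>z. f (fst z) (snd z) * CL_weight \<alpha> (fst z) (snd z))"
    and "set_integrable lborel ({0<..} \<times> {0<..}) (\<lambda>z. g (fst z) (snd z) * CL_weight \<alpha> (fst z) (snd z))"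
  shows "CL_int \<alpha> (\<lambda>x y. f x y + g x y) = CL_int \<alpha> f + CL_int \<alpha> g"
  using set_integral_add(2)[OF assms] by (simp add: CL_int_def distrib_right)

lemma CL_int_mult_left: "CL_int \<alpha> (\<lambda>x y. c * f x y) = c * CL_int \<alpha> f"
  by (simp add: CL_int_def mult.assoc)

definition CL_form :: "real \<Rightarrow> real poly \<Rightarrow> real poly \<Rightarrow> real" where
  "CL_form \<alpha> P Q = CL_int \<alpha> (\<lambda>x y. poly P x * poly Q y)"

lemma CL_form_linear_left:
  assumes "\<alpha> > -1"
  shows "linear_poly_functional (\<lambda>P. CL_form \<alpha> P Q)"
  unfolding linear_poly_functional_def CL_form_def
  by (simp add: distrib_right mult.assoc CL_int_mult_left
      CL_int_add[OF set_integrable_CL_poly set_integrable_CL_poly, OF assms assms])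

lemma CL_form_linear_right:
  assumes "\<alpha> > -1"
  shows "linear_poly_functional (\<lambda>Q. CL_form \<alpha> P Q)"
  unfolding linear_poly_functional_def CL_form_def
  by (simp add: distrib_left mult.left_commute CL_int_mult_left
      CL_int_add[OF set_integrable_CL_poly set_integrable_CL_poly, OF assms assms])

lemma CL_biorthogonal_form:
  assumes "CL_biorthogonal \<alpha> p q"
  shows "CL_form \<alpha> (p m) (q n) = (if m = n then CL_h \<alpha> p q n else 0)"
  using assms by (simp add: CL_biorthogonal_def CL_form_def CL_h_def)

theorem corollary1:
  fixes \<alpha> :: real and p q :: "nat \<Rightarrow> real poly"
  assumes "\<alpha> > -1"
    and "CL_biorthogonal \<alpha> p q"
  shows "\<forall>\<beta> k j.
     CL_int \<alpha> (\<lambda>x y. x ^ \<beta> * poly (p k) x * poly (q j) y) / CL_h \<alpha> p q j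
       = (\<Sum>l\<le>k. coeff (p k) l * bcoef p (\<beta> + l) (int (\<beta> + l) - int j))
   \<and> CL_int \<alpha> (\<lambda>x y. y ^ \<beta> * poly (p j) x * poly (q k) y) / CL_h \<alpha> p q j
       = (\<Sum>l\<le>k. coeff (q k) l * bcoef q (\<beta> + l) (int (\<beta> + l) - int j))"
proof -
  have deg: "degree (p n) = n" "degree (q n) = n"
    and monic: "lead_coeff (p n) = 1" "lead_coeff (q n) = 1"
    and h: "CL_h \<alpha> p q n \<noteq> 0" for n
    using assms(2) unfolding CL_biorthogonal_def by blast+
  have orth_left: "CL_form \<alpha> (p m) (q j) = (if m = j then CL_h \<alpha> p q j else 0)"
    and orth_right: "CL_form \<alpha> (p j) (q m) = (if m = j then CL_h \<alpha> p q j else 0)" for m j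
    using CL_biorthogonal_form[OF assms(2)] by auto
  have x_moment: "CL_int \<alpha> (\<lambda>x y. x ^ \<beta> * poly (p k) x * poly (q j) y)
      = (\<Sum>l\<le>k. coeff (p k) l * bcoef p (\<beta> + l) (int (\<beta> + l) - int j)) * CL_h \<alpha> p q j" for \<beta> k j
    using biorthogonal_functional_moment[OF CL_form_linear_left[OF assms(1)] deg(1) monic(1) orth_left,
        where m = \<beta> and P = "p k"]
    by (simp add: deg CL_form_def poly_monom)
  have y_moment: "CL_int \<alpha> (\<lambda>x y. y ^ \<beta> * poly (p j) x * poly (q k) y)
      = (\<Sum>l\<le>k. coeff (q k) l * bcoef q (\<beta> + l) (int (\<beta> + l) - int j)) * CL_h \<alpha> p q j" for \<beta> k j
    using biorthogonal_functional_moment[OF CL_form_linear_right[OF assms(1)] deg(2) monic(2) orth_right,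
        where m = \<beta> and P = "q k"]
    by (simp add: deg CL_form_def poly_monom mult_ac)
  show ?thesis
    using x_moment y_moment h by simp
qed

end
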